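(* Let $A_0\in\mathfrak{gl}_n(\mathbb C)$ and let $A_t$ be the solution of $\dot A_t=A_t[A_t,A_t^*]$ with initial value $A_0$ (it exists for all $t\ge0$). Let $\omega(A_0)$ be the set of all limits $\lim_{k\to\infty}A_{t_k}$ over sequences $t_k\to\infty$ along which the limit exists. Then $\omega(A_0)=\{0\}$ if and only if $A_0$ is nilpotent.
   Context: $A^*$ is the conjugate transpose and $[X,Y]=XY-YX$. *)

theory Defs
  imports "HOL-Analysis.Analysis"
begin

definition conj_transpose :: "complex^'n^'n \<Rightarrow> complex^'n^'n" where
  "conj_transpose A = (\<chi> i j. cnj (A $ j $ i))"

definition commutator :: "complex^'n^'n \<Rightarrow> complex^'n^'n \<Rightarrow> complex^'n^'n" where
  "commutator X Y = X ** Y - Y ** X"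

definition mat_pow :: "complex^'n^'n \<Rightarrow> nat \<Rightarrow> complex^'n^'n" where
  "mat_pow A k = ((\<lambda>B. A ** B) ^^ k) (mat 1)"

definition nilpotent_matrix :: "complex^'n^'n \<Rightarrow> bool" where
  "nilpotent_matrix A \<longleftrightarrow> (\<exists>k. mat_pow A k = 0)"

definition omega_limit :: "(real \<Rightarrow> complex^'n^'n) \<Rightarrow> (complex^'n^'n) set" where
  "omega_limit A = {L. \<exists>t :: nat \<Rightarrow> real. filterlim t at_top sequentially \<and>
                        (\<lambda>k. A (t k)) \<longlonglongrightarrow> L}"

end

(*
  Along the flow d/dt A^k = [A^k, A A^*], so every trace tr (A^k) is conserved, and
  d/dt |A|^2 = -|[A, A^*]|^2 for the Frobenius norm.  A complex matrix is nilpotent iff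
  tr (X^k) = 0 for all k >= 1 (Jordan form plus power sums of the eigenvalues), so a limit
  point 0 forces A_0 to be nilpotent.  Conversely, nilpotency is then conserved, a normal
  nilpotent matrix is zero, and compactness of the nilpotent matrices of norm 1 together with
  homogeneity gives |[X, X^*]|^2 >= c |X|^4 for nilpotent X.  Hence f = |A|^2 satisfies
  f' <= -c f^2, which forces f -> 0.
*)
theory Submission
  imports Defs "Jordan_Normal_Form.Jordan_Normal_Form_Existence"
begin

section \<open>Nilpotency and traces of powers\<close>

lemma sum_list_map_if_eq:
  "(\<Sum>x\<leftarrow>xs. if x = a then c else 0) = of_nat (count_list xs a) * (c :: 'a::semiring_1)"
  by (induct xs) (simp_all add: algebra_simps)

lemma power_sums_eq_0_imp_eq_0:
  fixes xs :: "'a::field_char_0 list"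
  assumes sums: "\<And>k. k \<ge> 1 \<Longrightarrow> (\<Sum>x\<leftarrow>xs. x ^ k) = 0"
  shows "set xs \<subseteq> {0}"
proof (rule ccontr)
  assume "\<not> set xs \<subseteq> {0}"
  then obtain \<mu> where \<mu>: "\<mu> \<in> set xs" "\<mu> \<noteq> 0" by auto
  \<comment> \<open>q has no constant term and vanishes on xs except at \<mu>, so the sum of q over xs is
    a combination of power sums, hence 0, and also a positive multiple of q \<mu> \<noteq> 0.\<close>
  define q where "q = [:0, 1:] * (\<Prod>\<nu>\<in>set xs - {0, \<mu>}. [:-\<nu>, 1:])"
  have poly_q: "poly q x = x * (\<Prod>\<nu>\<in>set xs - {0, \<mu>}. x - \<nu>)" for x
    by (simp add: q_def poly_prod)
  have "(\<Sum>x\<leftarrow>xs. poly q x) = (\<Sum>x\<leftarrow>xs. \<Sum>i\<le>degree q. coeff q i * x ^ i)"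
    by (simp add: poly_altdef)
  also have "\<dots> = (\<Sum>i\<le>degree q. coeff q i * (\<Sum>x\<leftarrow>xs. x ^ i))"
    by (induct xs) (simp_all add: sum.distrib distrib_left)
  also have "\<dots> = 0"
  proof (rule sum.neutral, intro ballI)
    fix i
    have "coeff q 0 = 0" using poly_q[of 0] by (simp add: poly_0_coeff_0)
    then show "coeff q i * (\<Sum>x\<leftarrow>xs. x ^ i) = 0"
      using sums[of i] by (cases "i = 0") simp_all
  qed
  finally have "(\<Sum>x\<leftarrow>xs. poly q x) = 0" .
  moreover have "(\<Sum>x\<leftarrow>xs. poly q x) = (\<Sum>x\<leftarrow>xs. if x = \<mu> then poly q \<mu> else 0)"
    by (rule arg_cong[where f = sum_list], rule map_cong) (auto simp: poly_q)
  moreover have "poly q \<mu> \<noteq> 0" and "count_list xs \<mu> \<noteq> 0"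
    using \<mu> by (simp_all add: poly_q count_list_0_iff)
  ultimately show False by (simp add: sum_list_map_if_eq)
qed

definition mat_trace :: "'a::comm_ring_1 mat \<Rightarrow> 'a" where
  "mat_trace A = sum_list (diag_mat A)"

lemma mat_trace_mult_comm:
  assumes "A \<in> carrier_mat n m" "B \<in> carrier_mat m n"
  shows "mat_trace (A * B) = mat_trace (B * A)"
proof -
  have diag_sum: "mat_trace C = (\<Sum>i<dim_row C. C $$ (i,i))" for C :: "'a mat"
    by (simp add: mat_trace_def diag_mat_def sum_list_sum_nth atLeast0LessThan)
  have "mat_trace (A * B) = (\<Sum>i<n. \<Sum>k<m. A $$ (i,k) * B $$ (k,i))"
    using assms by (simp add: diag_sum scalar_prod_def atLeast0LessThan)
  also have "\<dots> = (\<Sum>k<m. \<Sum>i<n. B $$ (k,i) * A $$ (i,k))"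
    by (subst sum.swap) (simp add: mult.commute)
  also have "\<dots> = mat_trace (B * A)"
    using assms by (simp add: diag_sum scalar_prod_def atLeast0LessThan)
  finally show ?thesis .
qed

lemma mat_trace_similar:
  assumes "similar_mat A B"
  shows "mat_trace A = mat_trace B"
proof -
  obtain P Q where "similar_mat_wit A B P Q"
    using assms by (auto simp: similar_mat_def)
  then obtain n where P: "P \<in> carrier_mat n n" and Q: "Q \<in> carrier_mat n n"
    and B: "B \<in> carrier_mat n n" and QP: "Q * P = 1\<^sub>m n" and A: "A = P * B * Q"
    by (auto simp: similar_mat_wit_def Let_def)
  have "mat_trace A = mat_trace (Q * (P * B))"
    unfolding A using P B Q by (intro mat_trace_mult_comm) auto
  also have "Q * (P * B) = B"
    using P B Q QP by (simp add: assoc_mult_mat[symmetric, of Q n n P n B n])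
  finally show ?thesis .
qed

lemma similar_mat_pow: "similar_mat A B \<Longrightarrow> similar_mat (A ^\<^sub>m k) (B ^\<^sub>m k)"
  unfolding similar_mat_def using similar_mat_wit_pow by blast

lemma similar_mat_zero_iff:
  assumes "similar_mat A B" and A: "A \<in> carrier_mat n n"
  shows "A = 0\<^sub>m n n \<longleftrightarrow> B = 0\<^sub>m n n"
proof -
  obtain P Q where wit: "similar_mat_wit A B P Q"
    using assms(1) unfolding similar_mat_def by blast
  note AB = similar_mat_witD2[OF A wit]
  note BA = similar_mat_witD2[OF AB(5) similar_mat_wit_sym[OF wit]]
  show ?thesis
  proof
    assume "A = 0\<^sub>m n n"
    then show "B = 0\<^sub>m n n"
      using BA(3) right_mult_zero_mat[OF AB(7)] left_mult_zero_mat[OF AB(6)] by metis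
  next
    assume "B = 0\<^sub>m n n"
    then show "A = 0\<^sub>m n n"
      using AB(3) right_mult_zero_mat[OF AB(6)] left_mult_zero_mat[OF AB(7)] by metis
  qed
qed

lemma diag_mat_diag_block_mat:
  assumes "\<forall>A\<in>set As. dim_row A = dim_col A"
  shows "diag_mat (diag_block_mat As) = concat (map diag_mat As)"
  using assms
proof (induct As)
  case (Cons A As)
  let ?B = "diag_block_mat As"
  have square: "\<forall>A\<in>set As. dim_row A = dim_col A"
    using Cons.prems by simp
  have "map dim_row As = map dim_col As"
    using square by (intro map_cong) auto
  then have "dim_row ?B = dim_col ?B"
    unfolding dim_diag_block_mat by (simp only:)
  then have B: "?B \<in> carrier_mat (dim_row ?B) (dim_row ?B)"
    unfolding carrier_mat_def by simp
  have A: "A \<in> carrier_mat (dim_row A) (dim_row A)"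
    using Cons.prems unfolding carrier_mat_def by simp
  from A B have "diag_mat (diag_block_mat (A # As)) = diag_mat A @ diag_mat ?B"
    unfolding diag_block_mat.simps Let_def by (rule diag_four_block_mat)
  then show ?case
    using Cons.hyps[OF square] by simp
qed (simp add: diag_mat_def)

lemma diag_mat_jordan_matrix:
  "diag_mat (jordan_matrix n_as) = concat (map (\<lambda>(m, a). replicate m a) n_as)"
proof -
  have "diag_mat (jordan_matrix n_as) =
      concat (map diag_mat (map (\<lambda>(m, a). jordan_block m a) n_as))"
    unfolding jordan_matrix_def by (rule diag_mat_diag_block_mat) auto
  also have "map diag_mat (map (\<lambda>(m, a). jordan_block m a) n_as) =
      map (\<lambda>(m, a). replicate m a) n_as"
  proof -
    have "diag_mat (jordan_block m a) = replicate m a" for m and a :: 'a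
      by (rule nth_equalityI) (auto simp: diag_mat_def)
    then show ?thesis
      by (induct n_as) auto
  qed
  finally show ?thesis .
qed

lemma diag_mat_jordan_matrix_pow:
  "diag_mat (jordan_matrix n_as ^\<^sub>m k) =
    map (\<lambda>a. a ^ k) (diag_mat (jordan_matrix n_as :: 'a :: field mat))"
proof -
  have "diag_mat (jordan_matrix n_as ^\<^sub>m k) =
      concat (map diag_mat (map (\<lambda>(m, a). jordan_block m a ^\<^sub>m k) n_as))"
    unfolding jordan_matrix_pow by (rule diag_mat_diag_block_mat) auto
  also have "map diag_mat (map (\<lambda>(m, a). jordan_block m a ^\<^sub>m k) n_as) =
      map (\<lambda>(m, a). replicate m (a ^ k)) n_as"
    by (induct n_as) (auto simp: diag_jordan_block_pow)
  also have "concat \<dots> = map (\<lambda>a. a ^ k) (concat (map (\<lambda>(m, a). replicate m a) n_as))"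
    by (induct n_as) auto
  finally show ?thesis
    unfolding diag_mat_jordan_matrix .
qed

lemma jordan_matrix_nilpotent_iff:
  fixes n_as :: "(nat \<times> 'a :: field) list"
  defines "N \<equiv> sum_list (map fst n_as)"
  shows "(\<exists>k. jordan_matrix n_as ^\<^sub>m k = 0\<^sub>m N N) \<longleftrightarrow>
    set (diag_mat (jordan_matrix n_as)) \<subseteq> {0}"
proof
  assume "\<exists>k. jordan_matrix n_as ^\<^sub>m k = 0\<^sub>m N N"
  then obtain k where "jordan_matrix n_as ^\<^sub>m k = 0\<^sub>m N N" ..
  then have "map (\<lambda>a. a ^ k) (diag_mat (jordan_matrix n_as)) = replicate N 0"
    by (metis diag_mat_jordan_matrix_pow diag_mat_zero)
  then have "a ^ k = 0" if "a \<in> set (diag_mat (jordan_matrix n_as))" for a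
    using that by (metis imageI in_set_replicate set_map)
  then show "set (diag_mat (jordan_matrix n_as)) \<subseteq> {0}"
    by auto
next
  assume diag_0: "set (diag_mat (jordan_matrix n_as)) \<subseteq> {0}"
  have "jordan_block m a ^\<^sub>m N = 0\<^sub>m m m" if block: "(m, a) \<in> set n_as" for m a
  proof (cases "m = 0")
    case False
    then have "a = 0"
      using block diag_0 unfolding diag_mat_jordan_matrix by force
    have "m \<in> set (map fst n_as)"
      using block by force
    then have "m \<le> N"
      unfolding N_def by (rule member_le_sum_list) simp
    then show ?thesis
      unfolding \<open>a = 0\<close> jordan_block_zero_pow by (intro eq_matI) auto
  qed (auto intro!: eq_matI)
  then have "jordan_matrix n_as ^\<^sub>m N = diag_block_mat (map (\<lambda>(m, a). 0\<^sub>m m m) n_as)"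
    unfolding jordan_matrix_pow by (intro arg_cong[where f = diag_block_mat] map_cong) auto
  also have "\<dots> = 0\<^sub>m N N"
    unfolding N_def by (induct n_as) (auto simp: Let_def)
  finally show "\<exists>k. jordan_matrix n_as ^\<^sub>m k = 0\<^sub>m N N" ..
qed

lemma nilpotent_iff_mat_trace_pow_eq_0:
  fixes A :: "complex mat"
  assumes A: "A \<in> carrier_mat n n"
  shows "(\<exists>k. A ^\<^sub>m k = 0\<^sub>m n n) \<longleftrightarrow> (\<forall>k\<ge>1. mat_trace (A ^\<^sub>m k) = 0)"
proof -
  obtain n_as where "jordan_nf A n_as"
    using char_poly_factorized[OF A] jordan_nf_exists[OF A] by blast
  then have sim: "similar_mat A (jordan_matrix n_as)"
    by (simp add: jordan_nf_def)
  let ?J = "jordan_matrix n_as"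
  obtain P Q where "similar_mat_wit A ?J P Q"
    using sim unfolding similar_mat_def by blast
  then have "?J \<in> carrier_mat n n"
    using similar_mat_witD2(5)[OF A] by blast
  then have N: "sum_list (map fst n_as) = n"
    by (metis carrier_matD(1) jordan_matrix_dim(1))
  have "(\<exists>k. A ^\<^sub>m k = 0\<^sub>m n n) \<longleftrightarrow> (\<exists>k. ?J ^\<^sub>m k = 0\<^sub>m n n)"
    using similar_mat_zero_iff[OF similar_mat_pow[OF sim] pow_carrier_mat[OF A]] by blast
  also have "\<dots> \<longleftrightarrow> set (diag_mat ?J) \<subseteq> {0}"
    using jordan_matrix_nilpotent_iff[of n_as] unfolding N .
  also have "\<dots> \<longleftrightarrow> (\<forall>k\<ge>1. sum_list (map (\<lambda>a. a ^ k) (diag_mat ?J)) = 0)"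
  proof
    assume "set (diag_mat ?J) \<subseteq> {0}"
    then have "map (\<lambda>a. a ^ k) (diag_mat ?J) = map (\<lambda>a. 0) (diag_mat ?J)" if "k \<ge> 1" for k
      using that by (intro map_cong) auto
    then show "\<forall>k\<ge>1. sum_list (map (\<lambda>a. a ^ k) (diag_mat ?J)) = 0"
      by (simp add: map_replicate_const sum_list_replicate)
  qed (use power_sums_eq_0_imp_eq_0 in blast)
  also have "\<dots> \<longleftrightarrow> (\<forall>k\<ge>1. mat_trace (A ^\<^sub>m k) = 0)"
    using mat_trace_similar[OF similar_mat_pow[OF sim]]
    by (simp add: mat_trace_def diag_mat_jordan_matrix_pow)
  finally show ?thesis .
qed

no_notation Matrix.vec_index (infixl "$" 100)

notation conj_transpose ("_\<^sup>H" [1000] 999)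

interpretation matrix_mult: bounded_bilinear "\<lambda>X Y :: complex^'n^'n. X ** Y"
proof -
  have "bilinear (\<lambda>X Y :: complex^'n^'n. X ** Y)"
    by (auto simp: bilinear_def matrix_add_ldistrib scalar_matrix_assoc matrix_scalar_ac
        intro!: linearI) (simp_all add: Finite_Cartesian_Product.vec_eq_iff matrix_matrix_mult_def
        sum.distrib algebra_simps)
  then show "bounded_bilinear (\<lambda>X Y :: complex^'n^'n. X ** Y)"
    by (simp add: bilinear_conv_bounded_bilinear)
qed

lemma bounded_linear_trace: "bounded_linear (trace :: complex^'n^'n \<Rightarrow> complex)"
  unfolding trace_def[abs_def]
  by (intro bounded_linear_sum bounded_linear_compose[OF bounded_linear_vec_nth bounded_linear_vec_nth])

lemma bounded_linear_conj_transpose: "bounded_linear (conj_transpose :: complex^'n^'n \<Rightarrow> _)"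
  by (auto simp: Finite_Cartesian_Product.vec_eq_iff conj_transpose_def
      intro!: linear_conv_bounded_linear[THEN iffD1] linearI)

lemma conj_transpose_conj_transpose [simp]: "(X\<^sup>H)\<^sup>H = X"
  by (simp add: conj_transpose_def Finite_Cartesian_Product.vec_eq_iff)

lemma conj_transpose_mult: "(X ** Y)\<^sup>H = Y\<^sup>H ** X\<^sup>H"
  by (simp add: conj_transpose_def Finite_Cartesian_Product.vec_eq_iff matrix_matrix_mult_def
      mult.commute)

lemma conj_transpose_diff: "(X - Y)\<^sup>H = X\<^sup>H - Y\<^sup>H"
  by (simp add: conj_transpose_def Finite_Cartesian_Product.vec_eq_iff)

lemma conj_transpose_scaleR: "(r *\<^sub>R X)\<^sup>H = r *\<^sub>R X\<^sup>H"
  by (simp add: conj_transpose_def Finite_Cartesian_Product.vec_eq_iff)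

lemma conj_transpose_one: "(Finite_Cartesian_Product.mat 1)\<^sup>H = Finite_Cartesian_Product.mat 1"
  by (simp add: conj_transpose_def Finite_Cartesian_Product.vec_eq_iff
      Finite_Cartesian_Product.mat_def)

lemma inner_eq_trace: "inner X Y = Re (trace (X ** Y\<^sup>H))"
  by (simp add: conj_transpose_def inner_vec_def trace_def matrix_matrix_mult_def inner_complex_def)

lemma norm_sq_eq_trace: "norm X ^ 2 = Re (trace (X ** X\<^sup>H))"
  by (simp add: power2_norm_eq_inner inner_eq_trace)

lemma mult_conj_transpose_eq_0: "X ** X\<^sup>H = 0 \<Longrightarrow> X = 0"
  using norm_sq_eq_trace[of X] by (simp add: trace_def)

lemma trace_commutator: "trace (commutator X Y) = 0"
  by (simp add: commutator_def trace_sub trace_mul_sym[of X])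

lemma mat_pow_0 [simp]: "mat_pow X 0 = Finite_Cartesian_Product.mat 1"
  by (simp add: mat_pow_def)

lemma mat_pow_Suc: "mat_pow X (Suc k) = X ** mat_pow X k"
  by (simp add: mat_pow_def)

lemma mat_pow_add: "mat_pow X (j + k) = mat_pow X j ** mat_pow X k"
  by (induct j) (simp_all add: mat_pow_def matrix_mul_assoc)

lemma mat_pow_Suc_right: "mat_pow X (Suc k) = mat_pow X k ** X"
  using mat_pow_add[of X k 1] by (simp add: mat_pow_def)

lemma mat_pow_eq_0_mono: "mat_pow X j = 0 \<Longrightarrow> j \<le> k \<Longrightarrow> mat_pow X k = 0"
  using mat_pow_add[of X j "k - j"] by simp

lemma mat_pow_scaleR: "mat_pow (r *\<^sub>R X) k = r ^ k *\<^sub>R mat_pow X k"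
  by (induct k) (simp_all add: mat_pow_Suc matrix_mult.scaleR_left matrix_mult.scaleR_right)

lemma conj_transpose_mat_pow: "(mat_pow X k)\<^sup>H = mat_pow (X\<^sup>H) k"
  by (induct k) (simp_all add: mat_pow_def conj_transpose_one conj_transpose_mult
      mat_pow_Suc_right[unfolded mat_pow_def, symmetric])

lemma mat_pow_commute: "X ** Y = Y ** X \<Longrightarrow> mat_pow X k ** Y = Y ** mat_pow X k"
  by (induct k) (simp_all add: mat_pow_Suc, metis matrix_mul_assoc)

lemma mat_pow_mult_commute:
  "X ** Y = Y ** X \<Longrightarrow> mat_pow (X ** Y) k = mat_pow X k ** mat_pow Y k"
proof (induct k)
  case (Suc k)
  have "mat_pow (X ** Y) (Suc k) = X ** (Y ** mat_pow X k) ** mat_pow Y k"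
    using Suc by (simp add: mat_pow_Suc matrix_mul_assoc)
  also have "\<dots> = X ** (mat_pow X k ** Y) ** mat_pow Y k"
    by (simp only: mat_pow_commute[OF Suc.prems])
  also have "\<dots> = mat_pow X (Suc k) ** mat_pow Y (Suc k)"
    by (simp add: mat_pow_Suc matrix_mul_assoc)
  finally show ?case .
qed (simp add: mat_pow_def)

lemma continuous_on_mat_pow: "continuous_on S (\<lambda>X :: complex^'n^'n. mat_pow X k)"
  by (induct k) (auto simp: mat_pow_Suc mat_pow_def intro: matrix_mult.continuous_on continuous_on_id)

lemma continuous_on_trace_mat_pow: "continuous_on S (\<lambda>X :: complex^'n^'n. trace (mat_pow X k))"
  by (rule bounded_linear.continuous_on[OF bounded_linear_trace continuous_on_mat_pow])

section \<open>Nilpotent complex matrices\<close>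

text \<open>The Jordan normal form is available for the nat-indexed matrices of type 'a mat;
  a matrix indexed by the finite type 'n is transported there along an enumeration h of 'n.\<close>

definition mat_of_hma :: "(nat \<Rightarrow> 'n::finite) \<Rightarrow> 'a^'n^'n \<Rightarrow> 'a mat" where
  "mat_of_hma h X = Matrix.mat CARD('n) CARD('n) (\<lambda>(i, j). X $ h i $ h j)"

lemma mat_of_hma_dim [simp]:
  "dim_row (mat_of_hma h X) = CARD('n)" "dim_col (mat_of_hma h X) = CARD('n)"
  for X :: "'a^'n::finite^'n"
  by (simp_all add: mat_of_hma_def)

lemma mat_of_hma_carrier: "mat_of_hma h X \<in> carrier_mat CARD('n) CARD('n)"
  for X :: "'a^'n::finite^'n"
  by (rule carrier_matI) simp_all

context
  fixes h :: "nat \<Rightarrow> 'n::finite"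
  assumes h: "bij_betw h {..<CARD('n)} UNIV"
begin

lemma mat_of_hma_mult:
  "mat_of_hma h (X ** Y) = mat_of_hma h X * mat_of_hma h (Y :: 'a::comm_semiring_1^'n^'n)"
proof (rule eq_matI)
  fix i j
  assume "i < dim_row (mat_of_hma h X * mat_of_hma h Y)" "j < dim_col (mat_of_hma h X * mat_of_hma h Y)"
  then have ij: "i < CARD('n)" "j < CARD('n)"
    by simp_all
  have "(mat_of_hma h X * mat_of_hma h Y) $$ (i, j) =
      (\<Sum>k<CARD('n). X $ h i $ h k * Y $ h k $ h j)"
    using ij by (simp add: mat_of_hma_def scalar_prod_def atLeast0LessThan)
  also have "\<dots> = (\<Sum>k\<in>UNIV. X $ h i $ k * Y $ k $ h j)"
    by (rule sum.reindex_bij_betw[OF h])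
  finally show "mat_of_hma h (X ** Y) $$ (i, j) = (mat_of_hma h X * mat_of_hma h Y) $$ (i, j)"
    using ij by (simp add: mat_of_hma_def matrix_matrix_mult_def)
qed simp_all

lemma mat_of_hma_one:
  "mat_of_hma h (Finite_Cartesian_Product.mat 1 :: 'a::semiring_1^'n^'n) = 1\<^sub>m CARD('n)"
proof (rule eq_matI)
  fix i j assume "i < dim_row (1\<^sub>m CARD('n) :: 'a mat)" "j < dim_col (1\<^sub>m CARD('n) :: 'a mat)"
  then have ij: "i < CARD('n)" "j < CARD('n)"
    by simp_all
  then have "h i = h j \<longleftrightarrow> i = j"
    using h by (auto simp: bij_betw_def inj_on_def)
  then show "mat_of_hma h (Finite_Cartesian_Product.mat 1) $$ (i, j) = 1\<^sub>m CARD('n) $$ (i, j)"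
    using ij by (simp add: mat_of_hma_def Finite_Cartesian_Product.mat_def)
qed simp_all

lemma mat_of_hma_mat_pow: "mat_of_hma h (mat_pow X k) = mat_of_hma h X ^\<^sub>m k"
  by (induct k) (simp_all add: mat_pow_Suc_right mat_of_hma_mult mat_of_hma_one)

lemma mat_of_hma_eq_0_iff:
  "mat_of_hma h X = 0\<^sub>m CARD('n) CARD('n) \<longleftrightarrow> X = (0 :: 'a::zero^'n^'n)"
proof
  assume X: "mat_of_hma h X = 0\<^sub>m CARD('n) CARD('n)"
  have "X $ h i $ h j = 0" if "i < CARD('n)" "j < CARD('n)" for i j
    using arg_cong[OF X, of "\<lambda>M. M $$ (i, j)"] that by (simp add: mat_of_hma_def)
  moreover have "\<forall>a. \<exists>i<CARD('n). h i = a"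
    using h by (metis UNIV_I bij_betw_def imageE lessThan_iff)
  ultimately show "X = 0"
    by (metis Finite_Cartesian_Product.vec_eq_iff zero_index)
qed (auto simp: mat_of_hma_def intro!: eq_matI)

lemma mat_trace_mat_of_hma: "mat_trace (mat_of_hma h X) = trace (X :: 'a::comm_ring_1^'n^'n)"
proof -
  have "mat_trace (mat_of_hma h X) = (\<Sum>i<CARD('n). X $ h i $ h i)"
    by (simp add: mat_trace_def mat_of_hma_def diag_mat_def sum_list_sum_nth atLeast0LessThan)
  also have "\<dots> = trace X"
    unfolding trace_def by (rule sum.reindex_bij_betw[OF h])
  finally show ?thesis .
qed

end

lemma nilpotent_matrix_iff_trace_mat_pow_eq_0:
  fixes X :: "complex^'n^'n"
  shows "nilpotent_matrix X \<longleftrightarrow> (\<forall>k\<ge>1. trace (mat_pow X k) = 0)"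
proof -
  obtain h :: "nat \<Rightarrow> 'n" where h: "bij_betw h {..<CARD('n)} UNIV"
    using ex_bij_betw_nat_finite[of "UNIV :: 'n set"] by (auto simp: atLeast0LessThan)
  have "nilpotent_matrix X \<longleftrightarrow> (\<exists>k. mat_of_hma h X ^\<^sub>m k = 0\<^sub>m CARD('n) CARD('n))"
    by (simp add: nilpotent_matrix_def mat_of_hma_mat_pow[OF h, symmetric]
        mat_of_hma_eq_0_iff[OF h])
  also have "\<dots> \<longleftrightarrow> (\<forall>k\<ge>1. mat_trace (mat_of_hma h X ^\<^sub>m k) = 0)"
    by (rule nilpotent_iff_mat_trace_pow_eq_0[OF mat_of_hma_carrier])
  also have "\<dots> \<longleftrightarrow> (\<forall>k\<ge>1. trace (mat_pow X k) = 0)"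
    by (simp add: mat_of_hma_mat_pow[OF h, symmetric] mat_trace_mat_of_hma[OF h])
  finally show ?thesis .
qed

lemma hermitian_nilpotent_eq_0:
  assumes hermitian: "H\<^sup>H = H" and nilpotent: "mat_pow H k = 0"
  shows "H = 0"
proof -
  have "mat_pow H (2 ^ j) = 0 \<Longrightarrow> H = 0" for j
  proof (induct j)
    case (Suc j)
    have "mat_pow H (2 ^ j) ** (mat_pow H (2 ^ j))\<^sup>H = mat_pow H (2 ^ Suc j)"
      by (simp only: conj_transpose_mat_pow hermitian mat_pow_add[symmetric] power_Suc mult_2)
    also have "\<dots> = 0"
      by (rule Suc.prems)
    finally show ?case
      by (rule Suc.hyps[OF mult_conj_transpose_eq_0])
  qed (simp add: mat_pow_def)
  moreover have "mat_pow H (2 ^ k) = 0"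
    using nilpotent by (rule mat_pow_eq_0_mono) simp
  ultimately show ?thesis .
qed

lemma normal_nilpotent_eq_0:
  assumes normal: "X ** X\<^sup>H = X\<^sup>H ** X" and nilpotent: "nilpotent_matrix X"
  shows "X = 0"
proof -
  obtain k where "mat_pow X k = 0"
    using nilpotent unfolding nilpotent_matrix_def ..
  then have "mat_pow (X\<^sup>H ** X) k = 0"
    using normal by (simp add: mat_pow_mult_commute)
  then have "X\<^sup>H ** X = 0"
    by (rule hermitian_nilpotent_eq_0[rotated]) (simp add: conj_transpose_mult)
  then have "X ** X\<^sup>H = 0"
    using normal by simp
  then show ?thesis
    by (rule mult_conj_transpose_eq_0)
qed

lemma closed_nilpotent_matrices: "closed {X :: complex^'n^'n. nilpotent_matrix X}"
proof -
  have "{X :: complex^'n^'n. nilpotent_matrix X} = (\<Inter>k\<in>{1..}. {X. trace (mat_pow X k) = 0})"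
    by (auto simp: nilpotent_matrix_iff_trace_mat_pow_eq_0)
  moreover have "closed {X :: complex^'n^'n. trace (mat_pow X k) = 0}" for k
    by (intro closed_Collect_eq continuous_on_const continuous_on_trace_mat_pow)
  ultimately show ?thesis
    by (simp add: closed_INT)
qed

lemma nilpotent_matrix_scaleR: "nilpotent_matrix X \<Longrightarrow> nilpotent_matrix (r *\<^sub>R X)"
  by (auto simp: nilpotent_matrix_def mat_pow_scaleR)

lemma commutator_conj_transpose_scaleR:
  "commutator (r *\<^sub>R X) ((r *\<^sub>R X)\<^sup>H) = r\<^sup>2 *\<^sub>R commutator X (X\<^sup>H)"
  by (simp add: commutator_def conj_transpose_scaleR matrix_mult.scaleR_left
      matrix_mult.scaleR_right scaleR_diff_right power2_eq_square)

lemma continuous_on_commutator_conj_transpose: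
  "continuous_on S (\<lambda>X :: complex^'n^'n. commutator X (X\<^sup>H))"
proof -
  have "continuous_on S (conj_transpose :: complex^'n^'n \<Rightarrow> _)"
    by (rule bounded_linear.continuous_on[OF bounded_linear_conj_transpose continuous_on_id])
  then show ?thesis
    unfolding commutator_def
    by (intro continuous_on_diff matrix_mult.continuous_on continuous_on_id)
qed

lemma compact_imp_pos_lower_bound:
  fixes g :: "'a::topological_space \<Rightarrow> real"
  assumes "compact K" "continuous_on K g" "\<And>x. x \<in> K \<Longrightarrow> 0 < g x"
  shows "\<exists>c>0. \<forall>x\<in>K. c \<le> g x"
proof (cases "K = {}")
  case False
  then obtain x0 where "x0 \<in> K" "\<forall>x\<in>K. g x0 \<le> g x"
    using continuous_attains_inf[OF assms(1) False assms(2)] by blast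
  then show ?thesis
    using assms(3) by blast
qed (auto intro: exI[of _ 1])

lemma nilpotent_commutator_lower_bound:
  "\<exists>c>0. \<forall>X :: complex^'n^'n. nilpotent_matrix X \<longrightarrow>
     c * norm X ^ 4 \<le> norm (commutator X (X\<^sup>H)) ^ 2"
proof -
  define K where "K = sphere 0 1 \<inter> {X :: complex^'n^'n. nilpotent_matrix X}"
  have "compact K"
    unfolding K_def by (intro compact_Int_closed compact_sphere closed_nilpotent_matrices)
  moreover have "continuous_on K (\<lambda>X. norm (commutator X (X\<^sup>H)) ^ 2)"
    by (intro continuous_on_power continuous_on_norm continuous_on_commutator_conj_transpose)
  moreover have "0 < norm (commutator X (X\<^sup>H)) ^ 2" if "X \<in> K" for X
  proof -
    have "X \<noteq> 0" "nilpotent_matrix X"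
      using that by (auto simp: K_def)
    then have "commutator X (X\<^sup>H) \<noteq> 0"
      using normal_nilpotent_eq_0 by (auto simp: commutator_def)
    then show ?thesis
      by simp
  qed
  ultimately obtain c where c: "c > 0" "\<forall>X\<in>K. c \<le> norm (commutator X (X\<^sup>H)) ^ 2"
    using compact_imp_pos_lower_bound by blast
  have "c * norm X ^ 4 \<le> norm (commutator X (X\<^sup>H)) ^ 2"
    if X: "nilpotent_matrix X" for X :: "complex^'n^'n"
  proof (cases "X = 0")
    case False
    let ?Y = "inverse (norm X) *\<^sub>R X"
    have "?Y \<in> K"
      using False X by (simp add: K_def nilpotent_matrix_scaleR)
    then have "c \<le> norm (commutator ?Y (?Y\<^sup>H)) ^ 2"
      using c(2) by blast
    also have "\<dots> = norm (commutator X (X\<^sup>H)) ^ 2 / norm X ^ 4"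
      by (simp add: commutator_conj_transpose_scaleR power_inverse divide_inverse
          power_mult_distrib flip: power_mult)
    finally show ?thesis
      using False by (simp add: field_simps)
  qed (simp add: commutator_def)
  with c(1) show ?thesis
    by blast
qed

section \<open>Long-time behaviour of the flow\<close>

lemma mult_commutator_conj_transpose: "X ** commutator X (X\<^sup>H) = commutator X (X ** X\<^sup>H)"
  by (simp add: commutator_def matrix_mult.diff_right matrix_mul_assoc)

lemma two_inner_mult_commutator:
  fixes X :: "complex^'n^'n"
  defines "C \<equiv> commutator X (X\<^sup>H)"
  shows "2 * inner X (X ** C) = - (norm C ^ 2)"
proof -
  let ?P = "X ** X\<^sup>H" and ?Q = "X\<^sup>H ** X"
  have C: "C = ?P - ?Q"
    by (simp add: C_def commutator_def)
  have hermitian: "C\<^sup>H = C"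
    by (simp add: C conj_transpose_diff conj_transpose_mult)
  have "trace (X ** (X ** C)\<^sup>H) = trace (X ** (C ** X\<^sup>H))"
    by (simp add: conj_transpose_mult hermitian)
  also have "\<dots> = trace (?Q ** C)"
    using trace_mul_sym[of "X ** C" "X\<^sup>H"] by (simp add: matrix_mul_assoc)
  finally have inner: "inner X (X ** C) = Re (trace (?Q ** C))"
    by (simp add: inner_eq_trace)
  have "trace (?P ** ?P) = trace (?Q ** ?Q)"
    using trace_mul_sym[of X "X\<^sup>H ** X ** X\<^sup>H"] by (simp add: matrix_mul_assoc)
  then have "trace (?P ** C) + trace (?Q ** C) = 0"
    by (simp add: C matrix_mult.diff_right trace_sub trace_mul_sym[of ?P ?Q])
  moreover have "norm C ^ 2 = Re (trace (?P ** C)) - Re (trace (?Q ** C))"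
  proof -
    have "norm C ^ 2 = Re (trace ((?P - ?Q) ** C))"
      by (simp only: norm_sq_eq_trace hermitian C[symmetric])
    then show ?thesis
      by (simp add: matrix_mult.diff_left trace_sub)
  qed
  ultimately show ?thesis
    using inner by (simp add: add_eq_0_iff)
qed

lemma has_vector_derivative_mat_pow_commutator:
  fixes B :: "real \<Rightarrow> complex^'n^'n"
  assumes "(B has_vector_derivative commutator (B t) P) (at t within S)"
  shows "((\<lambda>s. mat_pow (B s) k) has_vector_derivative commutator (mat_pow (B t) k) P)
    (at t within S)"
proof (induct k)
  case 0
  show ?case
    by (simp add: commutator_def)
next
  case (Suc k)
  have "((\<lambda>s. B s ** mat_pow (B s) k) has_vector_derivative
      B t ** commutator (mat_pow (B t) k) P + commutator (B t) P ** mat_pow (B t) k) (at t within S)"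
    by (rule matrix_mult.has_vector_derivative[OF assms Suc])
  moreover have "B t ** commutator (mat_pow (B t) k) P + commutator (B t) P ** mat_pow (B t) k =
      commutator (mat_pow (B t) (Suc k)) P"
    by (simp add: commutator_def mat_pow_Suc matrix_mult.diff_left matrix_mult.diff_right
        matrix_mul_assoc)
  ultimately show ?case
    by (simp add: mat_pow_Suc)
qed

lemma deriv_nonpos_within_imp_decreasing:
  fixes h h' :: "real \<Rightarrow> real"
  assumes "a \<le> b" "{a..b} \<subseteq> S"
    and deriv: "\<And>t. t \<in> {a..b} \<Longrightarrow> (h has_real_derivative h' t) (at t within S)"
    and nonpos: "\<And>t. t \<in> {a..b} \<Longrightarrow> h' t \<le> 0"
  shows "h b \<le> h a"
proof (rule DERIV_nonpos_imp_decreasing_open[OF assms(1)])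
  show "continuous_on {a..b} h"
    unfolding continuous_on_eq_continuous_within
    using deriv assms(2) by (blast intro: continuous_within_subset DERIV_continuous)
next
  fix t assume "a < t" "t < b"
  then have "t \<in> interior S"
    using interior_mono[OF assms(2)] by auto
  then have "at t within S = at t"
    by (rule at_within_interior)
  moreover have "t \<in> {a..b}"
    using \<open>a < t\<close> \<open>t < b\<close> by simp
  ultimately show "\<exists>y. (h has_real_derivative y) (at t) \<and> y \<le> 0"
    using deriv nonpos by metis
qed

lemma tendsto_zero_if_deriv_le_neg_square:
  fixes f f' :: "real \<Rightarrow> real"
  assumes c: "0 < c"
    and nonneg: "\<And>t. 0 \<le> t \<Longrightarrow> 0 \<le> f t"
    and deriv: "\<And>t. 0 \<le> t \<Longrightarrow> (f has_real_derivative f' t) (at t within {0..})"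
    and bound: "\<And>t. 0 \<le> t \<Longrightarrow> f' t \<le> - c * f t ^ 2"
  shows "(f \<longlongrightarrow> 0) at_top"
proof -
  have "f' t \<le> 0" if "0 \<le> t" for t
  proof -
    have "0 \<le> c * f t ^ 2"
      using c by simp
    then show ?thesis
      using bound[OF that] by linarith
  qed
  then have decreasing: "f b \<le> f a" if "0 \<le> a" "a \<le> b" for a b
    using deriv that by (intro deriv_nonpos_within_imp_decreasing[of a b "{0..}" f f']) auto
  have small: "f T < \<epsilon>" if \<epsilon>: "0 < \<epsilon>" and T: "T = f 0 / (c * \<epsilon>\<^sup>2) + 1" for \<epsilon> T
  proof (rule ccontr)
    assume "\<not> f T < \<epsilon>"
    have "0 < c * \<epsilon>\<^sup>2"
      using c \<epsilon> by simp
    then have "0 \<le> T" and cT: "c * \<epsilon>\<^sup>2 * T = f 0 + c * \<epsilon>\<^sup>2"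
      using nonneg[of 0] c \<epsilon> by (simp_all add: T field_simps)
    define g where "g t = f t + c * \<epsilon>\<^sup>2 * t" for t
    have "g T \<le> g 0"
    proof (rule deriv_nonpos_within_imp_decreasing[of 0 T "{0..}" g "\<lambda>t. f' t + c * \<epsilon>\<^sup>2"])
      fix t assume t: "t \<in> {0..T}"
      then show "(g has_real_derivative f' t + c * \<epsilon>\<^sup>2) (at t within {0..})"
        unfolding g_def[abs_def] using deriv[of t] by (auto intro!: derivative_eq_intros)
      have "\<epsilon> \<le> f t"
        using decreasing[of t T] t \<open>\<not> f T < \<epsilon>\<close> by auto
      then have "c * \<epsilon>\<^sup>2 \<le> c * f t ^ 2"
        using c \<epsilon> by (simp add: power_mono)
      then show "f' t + c * \<epsilon>\<^sup>2 \<le> 0"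
        using bound[of t] t by simp
    qed (use \<open>0 \<le> T\<close> in auto)
    then have "f T + c * \<epsilon>\<^sup>2 \<le> 0"
      using cT by (simp add: g_def)
    then show False
      using \<open>\<not> f T < \<epsilon>\<close> \<open>0 < c * \<epsilon>\<^sup>2\<close> \<epsilon> by linarith
  qed
  have "\<forall>t\<ge>f 0 / (c * \<epsilon>\<^sup>2) + 1. dist (f t) 0 < \<epsilon>" if "0 < \<epsilon>" for \<epsilon>
  proof (intro allI impI)
    fix t assume t: "f 0 / (c * \<epsilon>\<^sup>2) + 1 \<le> t"
    have "0 \<le> f 0 / (c * \<epsilon>\<^sup>2)"
      using nonneg[of 0] c by simp
    then have "0 \<le> f t" "f t \<le> f (f 0 / (c * \<epsilon>\<^sup>2) + 1)"
      using nonneg decreasing t by simp_all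
    then show "dist (f t) 0 < \<epsilon>"
      using small[OF that refl] by simp
  qed
  then show ?thesis
    unfolding tendsto_iff eventually_at_top_linorder by blast
qed

lemma omega_limit_eq_singleton_if_tendsto:
  assumes "(A \<longlongrightarrow> L) at_top"
  shows "omega_limit A = {L}"
proof
  show "omega_limit A \<subseteq> {L}"
  proof
    fix L' assume "L' \<in> omega_limit A"
    then obtain t :: "nat \<Rightarrow> real"
      where "filterlim t at_top sequentially" "(\<lambda>k. A (t k)) \<longlonglongrightarrow> L'"
      unfolding omega_limit_def by blast
    moreover from this(1) have "(\<lambda>k. A (t k)) \<longlonglongrightarrow> L"
      by (rule filterlim_compose[OF assms])
    ultimately show "L' \<in> {L}"
      using LIMSEQ_unique by auto
  qed
  show "{L} \<subseteq> omega_limit A"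
    unfolding omega_limit_def
    using filterlim_compose[OF assms filterlim_real_sequentially] filterlim_real_sequentially
    by auto
qed

lemma omega_limit_invariant:
  fixes g :: "complex^'n^'n \<Rightarrow> 'a::t2_space"
  assumes "L \<in> omega_limit A" and "isCont g L" and invariant: "\<And>t. 0 \<le> t \<Longrightarrow> g (A t) = c"
  shows "g L = c"
proof -
  obtain t :: "nat \<Rightarrow> real"
    where t: "filterlim t at_top sequentially" and lim: "(\<lambda>k. A (t k)) \<longlonglongrightarrow> L"
    using assms(1) unfolding omega_limit_def by blast
  have "(\<lambda>k. g (A (t k))) \<longlonglongrightarrow> g L"
    using isCont_tendsto_compose[OF assms(2) lim] .
  moreover have "eventually (\<lambda>k. 0 \<le> t k) sequentially"
    using t unfolding filterlim_at_top by blast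
  then have "eventually (\<lambda>k. g (A (t k)) = c) sequentially"
    by (rule eventually_mono) (rule invariant)
  then have "(\<lambda>k. g (A (t k))) \<longlonglongrightarrow> c"
    by (rule tendsto_eventually)
  ultimately show ?thesis
    by (rule LIMSEQ_unique)
qed

locale commutator_flow =
  fixes A :: "real \<Rightarrow> complex^'n^'n"
  assumes ode: "\<And>t. t \<ge> 0 \<Longrightarrow>
    (A has_vector_derivative (A t ** commutator (A t) ((A t)\<^sup>H))) (at t within {0..})"
begin

lemma trace_mat_pow_eq:
  assumes "0 \<le> t"
  shows "trace (mat_pow (A t) k) = trace (mat_pow (A 0) k)"
proof -
  have "((\<lambda>s. trace (mat_pow (A s) k)) has_vector_derivative 0) (at s within {0..})"
    if "s \<in> {0..}" for s
  proof -
    have "(A has_vector_derivative commutator (A s) (A s ** (A s)\<^sup>H)) (at s within {0..})"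
      using ode[of s] that by (simp add: mult_commutator_conj_transpose)
    from bounded_linear.has_vector_derivative[OF bounded_linear_trace
        has_vector_derivative_mat_pow_commutator[OF this]]
    show ?thesis
      by (simp add: trace_commutator)
  qed
  then have "\<exists>c. \<forall>s\<in>{0..}. trace (mat_pow (A s) k) = c"
    by (intro has_derivative_zero_constant) (auto simp: has_vector_derivative_def)
  then obtain c where "\<forall>s\<in>{0..}. trace (mat_pow (A s) k) = c"
    by blast
  then show ?thesis
    using assms by simp
qed

lemma nilpotent_matrix_iff_initial:
  assumes "0 \<le> t"
  shows "nilpotent_matrix (A t) \<longleftrightarrow> nilpotent_matrix (A 0)"
  unfolding nilpotent_matrix_iff_trace_mat_pow_eq_0 by (simp only: trace_mat_pow_eq[OF assms])

lemma has_real_derivative_norm_sq: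
  assumes "0 \<le> t"
  shows "((\<lambda>s. norm (A s) ^ 2) has_real_derivative
    - (norm (commutator (A t) ((A t)\<^sup>H)) ^ 2)) (at t within {0..})"
proof -
  have "((\<lambda>s. inner (A s) (A s)) has_vector_derivative
      2 * inner (A t) (A t ** commutator (A t) ((A t)\<^sup>H))) (at t within {0..})"
    using bounded_bilinear.has_vector_derivative[OF bounded_bilinear_inner ode[OF assms] ode[OF assms]]
    by (simp add: inner_commute[of _ "A t"])
  then show ?thesis
    by (simp add: two_inner_mult_commutator power2_norm_eq_inner
        has_real_derivative_iff_has_vector_derivative)
qed

lemma tendsto_zero_if_nilpotent:
  assumes "nilpotent_matrix (A 0)"
  shows "(A \<longlongrightarrow> 0) at_top"
proof -
  obtain c where c: "c > 0"
    and lower_bound: "\<And>X :: complex^'n^'n. nilpotent_matrix X \<Longrightarrow>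
      c * norm X ^ 4 \<le> norm (commutator X (X\<^sup>H)) ^ 2"
    using nilpotent_commutator_lower_bound by blast
  have "nilpotent_matrix (A t)" if "0 \<le> t" for t
    using assms nilpotent_matrix_iff_initial[OF that] by blast
  then have "- (norm (commutator (A t) ((A t)\<^sup>H)) ^ 2) \<le> - c * (norm (A t) ^ 2) ^ 2"
    if "0 \<le> t" for t
    using lower_bound that by (simp flip: power_mult)
  then have "((\<lambda>t. norm (A t) ^ 2) \<longlongrightarrow> 0) at_top"
    using c has_real_derivative_norm_sq by (intro tendsto_zero_if_deriv_le_neg_square) auto
  then have "((\<lambda>t. sqrt (norm (A t) ^ 2)) \<longlongrightarrow> 0) at_top"
    using tendsto_real_sqrt by fastforce
  then show ?thesis
    by (simp add: tendsto_norm_zero_iff)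
qed

lemma nilpotent_if_zero_in_omega_limit:
  assumes "0 \<in> omega_limit A"
  shows "nilpotent_matrix (A 0)"
proof -
  have "trace (mat_pow (A 0) k) = 0" if "k \<ge> 1" for k
  proof -
    have cont: "isCont (\<lambda>X :: complex^'n^'n. trace (mat_pow X k)) 0"
      using continuous_on_trace_mat_pow[of "UNIV :: (complex^'n^'n) set" k]
      by (simp add: continuous_on_eq_continuous_at)
    have "trace (mat_pow (0 :: complex^'n^'n) k) = trace (mat_pow (A 0) k)"
      using assms cont by (rule omega_limit_invariant) (rule trace_mat_pow_eq)
    moreover have "mat_pow 0 k = (0 :: complex^'n^'n)"
      using that by (cases k) (simp_all add: mat_pow_Suc)
    ultimately show ?thesis
      by (simp add: trace_def)
  qed
  then show ?thesis
    by (simp add: nilpotent_matrix_iff_trace_mat_pow_eq_0)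
qed

end

theorem proposition4p6:
  fixes A :: "real \<Rightarrow> complex^'n^'n" and A0 :: "complex^'n^'n"
  assumes init: "A 0 = A0"
    and ode: "\<And>t. t \<ge> 0 \<Longrightarrow>
      (A has_vector_derivative (A t ** commutator (A t) (conj_transpose (A t)))) (at t within {0..})"
  shows "omega_limit A = {0} \<longleftrightarrow> nilpotent_matrix A0"
proof -
  interpret commutator_flow A
    using ode by unfold_locales
  show ?thesis
  proof
    assume "omega_limit A = {0}"
    then show "nilpotent_matrix A0"
      using nilpotent_if_zero_in_omega_limit init by simp
  next
    assume "nilpotent_matrix A0"
    then show "omega_limit A = {0}"
      using tendsto_zero_if_nilpotent omega_limit_eq_singleton_if_tendsto init by simp
  qed
qed

end
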